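(* Assume (A1), (A2), (A4), (A5), (A6) and (A7) of the context. Then for $1\le k,\ell\le d$, $$\frac1{\sqrt n}\sum_{i=1}^n\Big\{R_{b_n,k}(Y_i)R_{b_n,\ell}(Y_i)\frac{f(Y_i)}{f_{b_n}(Y_i)}-\mathbb{E}\Big[R_{b_n,k}(Y)R_{b_n,\ell}(Y)\frac{f(Y)}{f_{b_n}(Y)}\Big]\Big\}$$ $$=\frac1{\sqrt n}\sum_{i=1}^n\Big\{R_k(Y_i)R_\ell(Y_i)-\mathbb{E}\big[R_k(Y)R_\ell(Y)\big]\Big\}+o_p(1).$$
   Context: Setting. $X=(X_1,\dots,X_d)^T$ is an $\mathbb{R}^d$-valued random vector and $Y$ a real random variable with density $f>0$ on $\mathbb{R}$; each $(X_j,Y)$ has joint density $f_{(X_j,Y)}$; $g_j(y)=\int xf_{(X_j,Y)}(x,y)dx$, $R_j=g_j/f$; $f,g_j\in L^2(\mathbb{R})$. $\{(X^{(i)},Y_i)\}_{i=1}^n$ i.i.d. sample of $(X,Y)$. $\varphi$ father wavelet, $\psi$ associated mother wavelet forming (via $\varphi(\cdot-k)$, $2^{\ell/2}\psi(2^\ell\cdot-k)$) an orthonormal basis of $L^2(\mathbb{R})$; $K(x,y)=\sum_k\varphi(x-k)\varphi(y-k)$. $(j_n)$ increasing integers tending to $\infty$. $(b_n)$ positive, $b_n\to0$; $f_{b_n}=\max(f,b_n)$, $R_{b_n,j}=g_j/f_{b_n}$. $u_n\sim v_n$ means $u_n/v_n$ bounded away from $0$ and $\infty$ for large $n$. Assumptions.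 (A1) $\|X\|\le G$ for some $G>0$. (A2) $f,g_j$ three times differentiable; there exist a neighborhood $U$ of $0$ and $c>0$ with $|f^{(3)}(y+u)-f^{(3)}(y)|\le c|u|$, $|g_j^{(3)}(y+u)-g_j^{(3)}(y)|\le c|u|$ for all $y$, $u\in U$, $j$. (A4) $\varphi,\psi$ bounded, compactly supported. (A5) $|K(x,y)|\le\Phi(x-y)$, $\Phi\ge0$ bounded, compactly supported, symmetric, $\int u^2\Phi^2<\infty$, $\int|u|^k\Phi<\infty$ for $k\in\{0,1,4\}$; $\int K(x,y)(y-x)^kdy=0$ for all $x$, $k\in\{1,2,3\}$. (A6) $2^{-j_n}\sim n^{-c_1}$, $b_n\sim n^{-c_2}$, $0<c_2<1/10$, $1/8+c_2/4<c_1<1/4-c_2$. (A7) $\mathbb{E}[R_j^2(Y)]<\infty$ for all $j$, and $\sqrt n\,\mathbb{E}[|R_k(Y)R_\ell(Y)|\mathbf 1_{\{f(Y)\le a_n\}}]\to0$ for all $k,\ell$ and every positive $(a_n)$ with $a_n\sim b_n$. *)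

theory Defs
  imports "HOL-Probability.Probability"
begin

definition L2_fun :: "(real \<Rightarrow> real) \<Rightarrow> bool" where
  "L2_fun h \<longleftrightarrow> h \<in> borel_measurable lborel \<and> integrable lborel (\<lambda>x. (h x)\<^sup>2)"

definition wavelet_sys :: "(real \<Rightarrow> real) \<Rightarrow> (real \<Rightarrow> real) \<Rightarrow> int + (nat \<times> int) \<Rightarrow> real \<Rightarrow> real" where
  "wavelet_sys \<phi> \<psi> a x = (case a of
      Inl k \<Rightarrow> \<phi> (x - real_of_int k)
    | Inr (l, k) \<Rightarrow> 2 powr (real l / 2) * \<psi> (2 ^ l * x - real_of_int k))"

definition wavelet_ONB :: "(real \<Rightarrow> real) \<Rightarrow> (real \<Rightarrow> real) \<Rightarrow> bool" where
  "wavelet_ONB \<phi> \<psi> \<longleftrightarrow>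
     (\<forall>a. L2_fun (wavelet_sys \<phi> \<psi> a)) \<and>
     (\<forall>a b. (LINT x|lborel. wavelet_sys \<phi> \<psi> a x * wavelet_sys \<phi> \<psi> b x) = (if a = b then 1 else 0)) \<and>
     (\<forall>h. L2_fun h \<and> (\<forall>a. (LINT x|lborel. h x * wavelet_sys \<phi> \<psi> a x) = 0)
          \<longrightarrow> (AE x in lborel. h x = 0))"

definition wkernel :: "(real \<Rightarrow> real) \<Rightarrow> real \<Rightarrow> real \<Rightarrow> real" where
  "wkernel \<phi> x y = (\<Sum>\<^sub>\<infinity>k::int. \<phi> (x - real_of_int k) * \<phi> (y - real_of_int k))"

definition bounded_fun :: "(real \<Rightarrow> real) \<Rightarrow> bool" where
  "bounded_fun h \<longleftrightarrow> (\<exists>B. \<forall>x. \<bar>h x\<bar> \<le> B)"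

definition compact_supp :: "(real \<Rightarrow> real) \<Rightarrow> bool" where
  "compact_supp h \<longleftrightarrow> (\<exists>r. \<forall>x. r < \<bar>x\<bar> \<longrightarrow> h x = 0)"

definition seq_sim :: "(nat \<Rightarrow> real) \<Rightarrow> (nat \<Rightarrow> real) \<Rightarrow> bool" where
  "seq_sim u v \<longleftrightarrow> (\<exists>A B. 0 < A \<and> (\<forall>\<^sub>F n in sequentially. A \<le> u n / v n \<and> u n / v n \<le> B))"

text \<open>g_j(y) = \<integral> x f_(X_j,Y)(x,y) dx, with fj j the joint density of (X_j, Y).\<close>
definition gfun :: "('d \<Rightarrow> real \<Rightarrow> real \<Rightarrow> real) \<Rightarrow> 'd \<Rightarrow> real \<Rightarrow> real" where
  "gfun fj j y = (LINT x|lborel. x * fj j x y)"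

definition Rfun :: "(real \<Rightarrow> real) \<Rightarrow> ('d \<Rightarrow> real \<Rightarrow> real \<Rightarrow> real) \<Rightarrow> 'd \<Rightarrow> real \<Rightarrow> real" where
  "Rfun f fj j y = gfun fj j y / f y"

definition Rbfun :: "(real \<Rightarrow> real) \<Rightarrow> ('d \<Rightarrow> real \<Rightarrow> real \<Rightarrow> real) \<Rightarrow> real \<Rightarrow> 'd \<Rightarrow> real \<Rightarrow> real" where
  "Rbfun f fj b j y = gfun fj j y / max (f y) b"

definition op1 :: "'a measure \<Rightarrow> (nat \<Rightarrow> 'a \<Rightarrow> real) \<Rightarrow> bool" where
  "op1 M Z \<longleftrightarrow> (\<forall>\<epsilon>>0. (\<lambda>n. measure M {\<omega> \<in> space M. \<epsilon> < \<bar>Z n \<omega>\<bar>}) \<longlonglongrightarrow> 0)"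

end

theory Submission
  imports Defs
begin

text \<open>Since \<open>R\<^sub>b\<^sub>,\<^sub>k R\<^sub>b\<^sub>,\<^sub>l f / f\<^sub>b = R\<^sub>k R\<^sub>l (f / f\<^sub>b)\<^sup>3\<close> and \<open>0 < f / f\<^sub>b \<le> 1\<close>, with equality
  unless \<open>f \<le> b\<close>, the two summands differ by at most \<open>\<bar>R\<^sub>k R\<^sub>l\<bar> 1{f \<le> b\<^sub>n}\<close>. Hence the
  difference of the two normalised centred sums is dominated by a variable with mean
  \<open>2 \<surd>n E[\<bar>R\<^sub>k(Y) R\<^sub>l(Y)\<bar> 1{f(Y) \<le> b\<^sub>n}]\<close>, which tends to 0 by (A7), and Markov's
  inequality gives convergence in probability. Only (A7) and the identical distribution of the
  sample enter.\<close>

lemma truncation_factor_bound: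
  fixes x c r :: real
  assumes "0 < x"
  shows "\<bar>r * (x / max x c) ^ 3 - r\<bar> \<le> \<bar>r\<bar> * indicator {..c} x"
proof (cases "c < x")
  case True
  then show ?thesis using assms by simp
next
  case False
  have "0 \<le> (x / c) ^ 3" "(x / c) ^ 3 \<le> 1"
    using False assms by (auto intro!: power_le_one)
  moreover have "r * (x / c) ^ 3 - r = - (r * (1 - (x / c) ^ 3))"
    by (simp add: algebra_simps)
  ultimately have "\<bar>r * (x / c) ^ 3 - r\<bar> = \<bar>r\<bar> * (1 - (x / c) ^ 3)"
    by (simp only: abs_minus_cancel abs_mult)
  also have "\<dots> \<le> \<bar>r\<bar>"
    using \<open>0 \<le> (x / c) ^ 3\<close> by (simp add: mult_left_le)
  finally show ?thesis using False by simp
qed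

lemma integrable_mult_of_square_integrable:
  fixes u v :: "'a \<Rightarrow> real"
  assumes [measurable]: "u \<in> borel_measurable M" "v \<in> borel_measurable M"
    and "integrable M (\<lambda>x. (u x)\<^sup>2)" "integrable M (\<lambda>x. (v x)\<^sup>2)"
  shows "integrable M (\<lambda>x. u x * v x)"
proof (rule Bochner_Integration.integrable_bound)
  show "integrable M (\<lambda>x. (u x)\<^sup>2 + (v x)\<^sup>2)"
    using assms by auto
  have "\<bar>u x * v x\<bar> \<le> (u x)\<^sup>2 + (v x)\<^sup>2" for x
    using sum_squares_bound[of "u x" "v x"] sum_squares_bound[of "u x" "- v x"]
    by (simp add: abs_le_iff mult.assoc)
  then show "AE x in M. norm (u x * v x) \<le> norm ((u x)\<^sup>2 + (v x)\<^sup>2)"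
    by (intro AE_I2) simp
qed measurable

lemma distr_eq_of_joint_distr_eq:
  fixes X X' :: "'a \<Rightarrow> 'b::second_countable_topology"
    and Y Y' :: "'a \<Rightarrow> 'c::second_countable_topology"
  assumes [measurable]: "X \<in> borel_measurable M" "Y \<in> borel_measurable M"
    "X' \<in> borel_measurable M" "Y' \<in> borel_measurable M"
    and joint: "distr M borel (\<lambda>\<omega>. (X' \<omega>, Y' \<omega>)) = distr M borel (\<lambda>\<omega>. (X \<omega>, Y \<omega>))"
  shows "distr M borel Y' = distr M borel Y"
proof -
  have [measurable]: "snd \<in> borel_measurable (borel :: ('b \<times> 'c) measure)"
    by (intro borel_measurable_continuous_onI continuous_intros)
  have "distr M borel Y' = distr (distr M borel (\<lambda>\<omega>. (X' \<omega>, Y' \<omega>))) borel snd"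
    by (subst distr_distr) (simp_all add: comp_def)
  also have "\<dots> = distr (distr M borel (\<lambda>\<omega>. (X \<omega>, Y \<omega>))) borel snd"
    by (simp only: joint)
  also have "\<dots> = distr M borel Y"
    by (subst distr_distr) (simp_all add: comp_def)
  finally show ?thesis .
qed

lemma
  fixes h :: "'b \<Rightarrow> 'c::{banach, second_countable_topology}"
  assumes Z: "Z \<in> measurable M N" and Y: "Y \<in> measurable M N" and h: "h \<in> borel_measurable N"
    and same: "distr M N Z = distr M N Y"
  shows integrable_comp_eq_of_distr_eq:
      "integrable M (\<lambda>\<omega>. h (Z \<omega>)) \<longleftrightarrow> integrable M (\<lambda>\<omega>. h (Y \<omega>))"
    and integral_comp_eq_of_distr_eq: "(LINT \<omega>|M. h (Z \<omega>)) = (LINT \<omega>|M. h (Y \<omega>))"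
  using integrable_distr_eq[OF Z h] integrable_distr_eq[OF Y h]
    integral_distr[OF Z h] integral_distr[OF Y h] same
  by simp_all

lemma seq_sim_refl:
  assumes "\<forall>\<^sub>F n in sequentially. u n \<noteq> 0"
  shows "seq_sim u u"
  unfolding seq_sim_def
  by (rule exI[of _ 1], rule exI[of _ 1]) (use assms in \<open>auto elim: eventually_mono\<close>)

lemma measurable_Rfun [measurable]:
  assumes [measurable]: "f \<in> borel_measurable borel" "gfun fj j \<in> borel_measurable borel"
  shows "Rfun f fj j \<in> borel_measurable borel"
  unfolding Rfun_def[abs_def] by measurable

lemma measurable_Rbfun [measurable]:
  assumes [measurable]: "f \<in> borel_measurable borel" "gfun fj j \<in> borel_measurable borel"
  shows "Rbfun f fj c j \<in> borel_measurable borel"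
  unfolding Rbfun_def[abs_def] by measurable

lemma Rbfun_product_truncation_bound:
  assumes "0 < f y"
  shows "\<bar>Rbfun f fj c k y * Rbfun f fj c l y * f y / max (f y) c - Rfun f fj k y * Rfun f fj l y\<bar>
    \<le> \<bar>Rfun f fj k y * Rfun f fj l y\<bar> * indicator {..c} (f y)"
proof -
  define q where "q = f y / max (f y) c"
  have "Rbfun f fj c j y = Rfun f fj j y * q" for j
    using assms unfolding q_def Rbfun_def Rfun_def by simp
  then have "Rbfun f fj c k y * Rbfun f fj c l y * f y / max (f y) c
      = (Rfun f fj k y * Rfun f fj l y) * (f y / max (f y) c) ^ 3"
    by (simp add: q_def power3_eq_cube mult_ac)
  then show ?thesis
    using truncation_factor_bound[OF assms, of "Rfun f fj k y * Rfun f fj l y" c] by simp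
qed

lemma (in finite_measure) op1_of_L1_dominated:
  assumes W_int: "\<And>n. integrable M (W n)"
    and dominated: "\<And>n \<omega>. \<bar>D n \<omega>\<bar> \<le> W n \<omega>"
    and W_lim: "(\<lambda>n. LINT \<omega>|M. W n \<omega>) \<longlonglongrightarrow> 0"
  shows "op1 M D"
  unfolding op1_def
proof (intro allI impI)
  fix \<epsilon> :: real
  assume "0 < \<epsilon>"
  have Markov: "measure M {\<omega> \<in> space M. \<epsilon> < \<bar>D n \<omega>\<bar>} \<le> (LINT \<omega>|M. W n \<omega>) / \<epsilon>" for n
  proof -
    have [measurable]: "W n \<in> borel_measurable M"
      using W_int by (rule borel_measurable_integrable)
    have "measure M {\<omega> \<in> space M. \<epsilon> < \<bar>D n \<omega>\<bar>} \<le> measure M {\<omega> \<in> space M. \<epsilon> \<le> W n \<omega>}"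
    proof (rule finite_measure_mono)
      show "{\<omega> \<in> space M. \<epsilon> < \<bar>D n \<omega>\<bar>} \<subseteq> {\<omega> \<in> space M. \<epsilon> \<le> W n \<omega>}"
        using dominated[of n] by (auto intro: order.trans[OF less_imp_le])
    qed measurable
    also have "\<dots> \<le> (LINT \<omega>|M. W n \<omega>) / \<epsilon>"
      using \<open>0 < \<epsilon>\<close>
      by (intro integral_Markov_inequality_measure[OF W_int, of "space M"])
         (auto intro!: AE_I2 order.trans[OF abs_ge_zero dominated[of n]])
    finally show ?thesis .
  qed
  show "(\<lambda>n. measure M {\<omega> \<in> space M. \<epsilon> < \<bar>D n \<omega>\<bar>}) \<longlonglongrightarrow> 0"
    by (rule real_tendsto_sandwich[OF _ _ tendsto_const tendsto_divide_zero[OF W_lim, of \<epsilon>]])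
       (use Markov in \<open>simp_all add: measure_nonneg\<close>)
qed

lemma (in prob_space) op1_normalized_centered_sums_diff:
  fixes Y :: "'a \<Rightarrow> real" and Ys :: "nat \<Rightarrow> 'a \<Rightarrow> real"
    and U h :: "nat \<Rightarrow> real \<Rightarrow> real" and V :: "real \<Rightarrow> real"
  assumes [measurable]: "Y \<in> borel_measurable M" "\<And>i. Ys i \<in> borel_measurable M"
      "\<And>n. U n \<in> borel_measurable borel" "V \<in> borel_measurable borel"
      "\<And>n. h n \<in> borel_measurable borel"
    and same_distr: "\<And>i. distr M borel (Ys i) = distr M borel Y"
    and V_int: "integrable M (\<lambda>\<omega>. V (Y \<omega>))"
    and h_int: "\<And>n. integrable M (\<lambda>\<omega>. h n (Y \<omega>))"
    and U_close: "\<And>n y. \<bar>U n y - V y\<bar> \<le> h n y"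
    and h_small: "(\<lambda>n. sqrt (real n) * (LINT \<omega>|M. h n (Y \<omega>))) \<longlonglongrightarrow> 0"
  shows "op1 M (\<lambda>n \<omega>.
     (1 / sqrt (real n)) * (\<Sum>i<n. U n (Ys i \<omega>) - (LINT \<omega>'|M. U n (Y \<omega>')))
   - (1 / sqrt (real n)) * (\<Sum>i<n. V (Ys i \<omega>) - (LINT \<omega>'|M. V (Y \<omega>'))))"
    (is "op1 M ?D")
proof -
  define e where "e n = (LINT \<omega>|M. h n (Y \<omega>))" for n
  have U_int: "integrable M (\<lambda>\<omega>. U n (Y \<omega>))" for n
  proof -
    have "integrable M (\<lambda>\<omega>. U n (Y \<omega>) - V (Y \<omega>))"
      by (rule Bochner_Integration.integrable_bound[OF h_int[of n]])
         (use U_close in \<open>auto intro!: AE_I2 order.trans[OF _ abs_ge_self]\<close>)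
    from Bochner_Integration.integrable_add[OF this V_int] show ?thesis by simp
  qed
  have means_close: "\<bar>(LINT \<omega>|M. U n (Y \<omega>)) - (LINT \<omega>|M. V (Y \<omega>))\<bar> \<le> e n" for n
  proof -
    have "\<bar>(LINT \<omega>|M. U n (Y \<omega>)) - (LINT \<omega>|M. V (Y \<omega>))\<bar>
        = \<bar>LINT \<omega>|M. U n (Y \<omega>) - V (Y \<omega>)\<bar>"
      using U_int V_int by simp
    also have "\<dots> \<le> (LINT \<omega>|M. \<bar>U n (Y \<omega>) - V (Y \<omega>)\<bar>)"
      by (rule integral_abs_bound)
    also have "\<dots> \<le> e n"
      unfolding e_def using U_close U_int V_int h_int by (intro integral_mono) auto
    finally show ?thesis .
  qed
  have h_Ys_int: "integrable M (\<lambda>\<omega>. h n (Ys i \<omega>))" for n i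
    using integrable_comp_eq_of_distr_eq[OF _ _ _ same_distr, where h = "h n"] h_int by simp
  have h_Ys_mean: "(LINT \<omega>|M. h n (Ys i \<omega>)) = e n" for n i
    unfolding e_def
    by (rule integral_comp_eq_of_distr_eq[OF _ _ _ same_distr, where h = "h n"]) measurable
  define W where "W n \<omega> = (1 / sqrt (real n)) * (\<Sum>i<n. h n (Ys i \<omega>) + e n)" for n \<omega>
  show ?thesis
  proof (rule op1_of_L1_dominated)
    show "integrable M (W n)" for n
      unfolding W_def using h_Ys_int by auto
    show "\<bar>?D n \<omega>\<bar> \<le> W n \<omega>" for n \<omega>
    proof -
      have "?D n \<omega> = (1 / sqrt (real n)) * (\<Sum>i<n. (U n (Ys i \<omega>) - V (Ys i \<omega>))
                 - ((LINT \<omega>'|M. U n (Y \<omega>')) - (LINT \<omega>'|M. V (Y \<omega>'))))"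
        by (simp only: sum_subtractf right_diff_distrib)
      also have "\<bar>\<dots>\<bar> \<le> (1 / sqrt (real n)) * (\<Sum>i<n. \<bar>(U n (Ys i \<omega>) - V (Ys i \<omega>))
                 - ((LINT \<omega>'|M. U n (Y \<omega>')) - (LINT \<omega>'|M. V (Y \<omega>')))\<bar>)"
        by (simp add: abs_mult) (rule divide_right_mono[OF sum_abs], simp)
      also have "\<dots> \<le> W n \<omega>"
        unfolding W_def
        by (intro mult_left_mono sum_mono order.trans[OF abs_triangle_ineq4] add_mono
            U_close means_close) auto
      finally show ?thesis .
    qed
    have "(LINT \<omega>|M. W n \<omega>) = 2 * (sqrt (real n) * e n)" for n
    proof -
      have "(LINT \<omega>|M. W n \<omega>) = (1 / sqrt (real n)) * (2 * real n * e n)"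
        unfolding W_def using h_Ys_int h_Ys_mean by (simp add: prob_space)
      also have "\<dots> = 2 * (sqrt (real n) * e n)"
        by (cases "n = 0") (auto simp: field_simps)
      finally show ?thesis .
    qed
    then show "(\<lambda>n. LINT \<omega>|M. W n \<omega>) \<longlonglongrightarrow> 0"
      using tendsto_mult_right_zero[OF h_small[folded e_def], of 2] by simp
  qed
qed

theorem lemma10:
  fixes M :: "'a measure"
    and X :: "'a \<Rightarrow> real ^ 'd" and Y :: "'a \<Rightarrow> real"
    and Xs :: "nat \<Rightarrow> 'a \<Rightarrow> real ^ 'd" and Ys :: "nat \<Rightarrow> 'a \<Rightarrow> real"
    and f :: "real \<Rightarrow> real" and fj :: "'d \<Rightarrow> real \<Rightarrow> real \<Rightarrow> real"
    and \<phi> \<psi> \<Phi> :: "real \<Rightarrow> real"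
    and jn :: "nat \<Rightarrow> int" and b :: "nat \<Rightarrow> real"
    and G c1 c2 :: real
    and k l :: 'd
  assumes P: "prob_space M"
    and X_meas: "X \<in> borel_measurable M" and Y_meas: "Y \<in> borel_measurable M"
    and Y_dens: "distributed M lborel Y (\<lambda>y. ennreal (f y))"
    and f_pos: "\<forall>y. 0 < f y"
    and fj_nonneg: "\<forall>j x y. 0 \<le> fj j x y"
    and XY_dens: "\<forall>j. distributed M (lborel \<Otimes>\<^sub>M lborel) (\<lambda>\<omega>. (X \<omega> $ j, Y \<omega>))
                          (\<lambda>(x, y). ennreal (fj j x y))"
    and f_L2: "L2_fun f" and g_L2: "\<forall>j. L2_fun (gfun fj j)"
    and sample_meas: "\<forall>i. Xs i \<in> borel_measurable M \<and> Ys i \<in> borel_measurable M"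
    and sample_indep: "prob_space.indep_vars M (\<lambda>_. borel) (\<lambda>i \<omega>. (Xs i \<omega>, Ys i \<omega>)) UNIV"
    and sample_id: "\<forall>i. distr M borel (\<lambda>\<omega>. (Xs i \<omega>, Ys i \<omega>)) = distr M borel (\<lambda>\<omega>. (X \<omega>, Y \<omega>))"
    \<comment> \<open>(A1)\<close>
    and A1: "0 < G" "AE \<omega> in M. norm (X \<omega>) \<le> G"
    \<comment> \<open>(A2)\<close>
    and A2_f: "\<forall>m<3. \<forall>y. (deriv ^^ m) f differentiable (at y)"
    and A2_g: "\<forall>j. \<forall>m<3. \<forall>y. (deriv ^^ m) (gfun fj j) differentiable (at y)"
    and A2_lip: "\<exists>U c. open U \<and> 0 \<in> U \<and> 0 < c \<and>
        (\<forall>y u. u \<in> U \<longrightarrow>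
           \<bar>(deriv ^^ 3) f (y + u) - (deriv ^^ 3) f y\<bar> \<le> c * \<bar>u\<bar> \<and>
           (\<forall>j. \<bar>(deriv ^^ 3) (gfun fj j) (y + u) - (deriv ^^ 3) (gfun fj j) y\<bar> \<le> c * \<bar>u\<bar>))"
    \<comment> \<open>wavelets\<close>
    and wav: "wavelet_ONB \<phi> \<psi>"
    \<comment> \<open>(A4)\<close>
    and A4: "bounded_fun \<phi>" "compact_supp \<phi>" "bounded_fun \<psi>" "compact_supp \<psi>"
    \<comment> \<open>(A5)\<close>
    and A5_K: "\<forall>x y. \<bar>wkernel \<phi> x y\<bar> \<le> \<Phi> (x - y)"
    and A5_Phi: "\<forall>u. 0 \<le> \<Phi> u" "bounded_fun \<Phi>" "compact_supp \<Phi>" "\<forall>u. \<Phi> (- u) = \<Phi> u"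
    and A5_int: "integrable lborel (\<lambda>u. u\<^sup>2 * (\<Phi> u)\<^sup>2)"
        "\<forall>m\<in>{0, 1, 4}. integrable lborel (\<lambda>u. \<bar>u\<bar> ^ m * \<Phi> u)"
    and A5_mom: "\<forall>x. \<forall>m\<in>{1, 2, 3}. (LINT y|lborel. wkernel \<phi> x y * (y - x) ^ m) = 0"
    \<comment> \<open>(j_n), (b_n)\<close>
    and jn_mono: "mono jn" and jn_lim: "filterlim jn at_top sequentially"
    and b_pos: "\<forall>n. 0 < b n" and b_lim: "b \<longlonglongrightarrow> 0"
    \<comment> \<open>(A6)\<close>
    and A6: "seq_sim (\<lambda>n. 2 powr (- real_of_int (jn n))) (\<lambda>n. real n powr (- c1))"
        "seq_sim b (\<lambda>n. real n powr (- c2))"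
        "0 < c2" "c2 < 1/10" "1/8 + c2/4 < c1" "c1 < 1/4 - c2"
    \<comment> \<open>(A7)\<close>
    and A7_sq: "\<forall>j. integrable M (\<lambda>\<omega>. (Rfun f fj j (Y \<omega>))\<^sup>2)"
    and A7_tail: "\<forall>k' l' a. (\<forall>n. 0 < a n) \<and> seq_sim a b \<longrightarrow>
        (\<lambda>n. sqrt (real n) *
           (LINT \<omega>|M. \<bar>Rfun f fj k' (Y \<omega>) * Rfun f fj l' (Y \<omega>)\<bar>
                       * indicator {\<omega>. f (Y \<omega>) \<le> a n} \<omega>)) \<longlonglongrightarrow> 0"
  shows "op1 M (\<lambda>n \<omega>.
     (1 / sqrt (real n)) * (\<Sum>i<n.
        Rbfun f fj (b n) k (Ys i \<omega>) * Rbfun f fj (b n) l (Ys i \<omega>) * f (Ys i \<omega>) / max (f (Ys i \<omega>)) (b n)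
        - (LINT \<omega>'|M. Rbfun f fj (b n) k (Y \<omega>') * Rbfun f fj (b n) l (Y \<omega>') * f (Y \<omega>') / max (f (Y \<omega>')) (b n)))
   - (1 / sqrt (real n)) * (\<Sum>i<n.
        Rfun f fj k (Ys i \<omega>) * Rfun f fj l (Ys i \<omega>)
        - (LINT \<omega>'|M. Rfun f fj k (Y \<omega>') * Rfun f fj l (Y \<omega>'))))"
proof -
  interpret prob_space M by (rule P)
  have [measurable]: "f \<in> borel_measurable borel" "\<And>j. gfun fj j \<in> borel_measurable borel"
    using f_L2 g_L2 unfolding L2_fun_def by simp_all
  have [measurable]: "\<And>i. Xs i \<in> borel_measurable M" "\<And>i. Ys i \<in> borel_measurable M"
    using sample_meas by simp_all
  note [measurable] = X_meas Y_meas
  define tail where "tail n y = \<bar>Rfun f fj k y * Rfun f fj l y\<bar> * indicator {..b n} (f y)" for n y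
  have [measurable]: "\<And>n. tail n \<in> borel_measurable borel"
    unfolding tail_def by measurable
  have R_int: "integrable M (\<lambda>\<omega>. Rfun f fj k (Y \<omega>) * Rfun f fj l (Y \<omega>))"
    using A7_sq by (intro integrable_mult_of_square_integrable; (measurable | blast))
  have tail_int: "integrable M (\<lambda>\<omega>. tail n (Y \<omega>))" for n
    by (rule Bochner_Integration.integrable_bound[OF integrable_abs[OF R_int]])
       (auto simp: tail_def indicator_def)
  have truncation: "\<bar>Rbfun f fj (b n) k y * Rbfun f fj (b n) l y * f y / max (f y) (b n)
      - Rfun f fj k y * Rfun f fj l y\<bar> \<le> tail n y" for n y
    unfolding tail_def by (rule Rbfun_product_truncation_bound) (use f_pos in blast)
  have "seq_sim b b"
    using b_pos by (intro seq_sim_refl) (simp add: less_imp_neq[symmetric])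
  then have "(\<lambda>n. sqrt (real n) * (LINT \<omega>|M. \<bar>Rfun f fj k (Y \<omega>) * Rfun f fj l (Y \<omega>)\<bar>
      * indicator {\<omega>. f (Y \<omega>) \<le> b n} \<omega>)) \<longlonglongrightarrow> 0"
    using A7_tail b_pos by blast
  moreover have "(LINT \<omega>|M. \<bar>Rfun f fj k (Y \<omega>) * Rfun f fj l (Y \<omega>)\<bar>
      * indicator {\<omega>. f (Y \<omega>) \<le> b n} \<omega>) = (LINT \<omega>|M. tail n (Y \<omega>))" for n
    unfolding tail_def by (intro Bochner_Integration.integral_cong) (simp_all add: indicator_def)
  ultimately have tail_small: "(\<lambda>n. sqrt (real n) * (LINT \<omega>|M. tail n (Y \<omega>))) \<longlonglongrightarrow> 0"
    by simp
  have same_distr: "distr M borel (Ys i) = distr M borel Y" for i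
    using sample_id by (intro distr_eq_of_joint_distr_eq[of X M Y "Xs i"]; (measurable | simp))
  show ?thesis
    by (rule op1_normalized_centered_sums_diff[where h = tail
          and U = "\<lambda>n y. Rbfun f fj (b n) k y * Rbfun f fj (b n) l y * f y / max (f y) (b n)"
          and V = "\<lambda>y. Rfun f fj k y * Rfun f fj l y",
          OF _ _ _ _ _ same_distr R_int tail_int truncation tail_small]; measurable)
qed

end
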